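(* Let $(\mathcal X,\mathcal B,\pi)$ be a measure space with $\pi$ $\sigma$-finite, let $r:\mathcal X\to\mathbb R$ be measurable, let $\{\varepsilon(x):x\in\mathcal X\}$ be a real-valued random field and $\varepsilon_1,\varepsilon_2,\dots$ i.i.d. copies of it, independent of all sampled points, and fix an integer $K\ge 2$. Let $p_0\in\mathcal P_\pi$ satisfy $\int p_0|\log p_0|\,d\pi<\infty$. Define recursively, for $t\in\mathbb N$, $p_{t+1}$ as a maximizer over $p\in\mathcal P_\pi$ of $$\mathcal L(p;p_t,K,0):=\mathbb E\bigl[\log p(\widehat X)\bigr],$$ where $X_1,\dots,X_K$ are i.i.d. with density $p_t$ and $\widehat X=X_I$ is the Plackett–Luce curated sample described in the context. Then for every $t\in\mathbb N$, $\mathcal L(p;p_t,K,0)=\mathbb E_{X\sim p_t}\bigl[\log p(X)\,H^K_{p_t}(X)\bigr]$, this functional has a unique maximizer over $p\in\mathcal P_\pi$, and the maximizer is $$p_{t+1}(x)=p_t(x)\,H^K_{p_t}(x),\qquad x\in\mathcal X.$$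
   Context: $\mathcal P_\pi$ is the set of probability measures on $(\mathcal X,\mathcal B)$ absolutely continuous w.r.t. $\pi$, identified with their densities. Plackett–Luce curation: given $X_1,\dots,X_K$ i.i.d. with density $p$ and noise copies $\varepsilon_1,\dots,\varepsilon_K$ (independent of the $X$'s), set $\tilde w_k=e^{r(X_k)+\varepsilon_k(X_k)}$ and draw an index $I\in\{1,\dots,K\}$ with $\mathbb P(I=k\mid X_{1:K},\varepsilon_{1:K})=\tilde w_k/\sum_{i=1}^K\tilde w_i$; the curated sample is $\widehat X=X_I$. The choice kernel is $$H^K_p(x):=\mathbb E\Bigl[K\,\frac{e^{r(x)+\varepsilon(x)}}{e^{r(x)+\varepsilon(x)}+\sum_{k=1}^{K-1}e^{r(X_k)+\varepsilon_k(X_k)}}\Bigr],$$ with $X_1,\dots,X_{K-1}$ i.i.d. with density $p$ and $\varepsilon,\varepsilon_1,\dots,\varepsilon_{K-1}$ i.i.d. copies of the noise field, all independent. *)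

theory Defs
  imports "HOL-Probability.Probability"
begin

definition dens_set :: "'a measure \<Rightarrow> ('a \<Rightarrow> real) set" where
  "dens_set M = {p. p \<in> borel_measurable M \<and> (\<forall>x\<in>space M. 0 \<le> p x)
                    \<and> (\<integral>\<^sup>+x. ennreal (p x) \<partial>M) = 1}"

definition elog :: "real \<Rightarrow> ereal" where
  "elog y = (if 0 < y then ereal (ln y) else -\<infinity>)"

definition eexp :: "'a measure \<Rightarrow> ('a \<Rightarrow> ereal) \<Rightarrow> ereal" where
  "eexp M f = enn2ereal (\<integral>\<^sup>+x. e2ennreal (f x) \<partial>M) - enn2ereal (\<integral>\<^sup>+x. e2ennreal (- f x) \<partial>M)"

text \<open>L(q; pt, K, 0) = E[log q(X_I)] for the Plackett-Luce curated sample, with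
  X_1..X_K iid ~ pt (indices 0..K-1), noise copies iid ~ the noise law N (independent
  of the X's); the expectation over the index I given (X, eps) is written out as the
  finite sum of the conditional choice probabilities.\<close>
definition PL_obj :: "'a measure \<Rightarrow> 'w measure \<Rightarrow> ('a \<Rightarrow> real) \<Rightarrow> ('w \<Rightarrow> 'a \<Rightarrow> real)
    \<Rightarrow> nat \<Rightarrow> ('a \<Rightarrow> real) \<Rightarrow> ('a \<Rightarrow> real) \<Rightarrow> ereal" where
  "PL_obj M N r \<epsilon> K pt q =
     eexp (PiM {..<K} (\<lambda>_. density M (\<lambda>x. ennreal (pt x))) \<Otimes>\<^sub>M PiM {..<K} (\<lambda>_. N))
       (\<lambda>(xs, es). \<Sum>k<K. ereal (exp (r (xs k) + \<epsilon> (es k) (xs k))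
                          / (\<Sum>i<K. exp (r (xs i) + \<epsilon> (es i) (xs i)))) * elog (q (xs k)))"

definition choice_kernel :: "'a measure \<Rightarrow> 'w measure \<Rightarrow> ('a \<Rightarrow> real) \<Rightarrow> ('w \<Rightarrow> 'a \<Rightarrow> real)
    \<Rightarrow> nat \<Rightarrow> ('a \<Rightarrow> real) \<Rightarrow> 'a \<Rightarrow> real" where
  "choice_kernel M N r \<epsilon> K p x =
     integral\<^sup>L (N \<Otimes>\<^sub>M (PiM {..<K-1} (\<lambda>_. N) \<Otimes>\<^sub>M PiM {..<K-1} (\<lambda>_. density M (\<lambda>y. ennreal (p y)))))
       (\<lambda>(\<omega>, es, xs). real K * exp (r x + \<epsilon> \<omega> x)
            / (exp (r x + \<epsilon> \<omega> x) + (\<Sum>k<K-1. exp (r (xs k) + \<epsilon> (es k) (xs k)))))"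

definition is_PL_maximizer :: "'a measure \<Rightarrow> 'w measure \<Rightarrow> ('a \<Rightarrow> real) \<Rightarrow> ('w \<Rightarrow> 'a \<Rightarrow> real)
    \<Rightarrow> nat \<Rightarrow> ('a \<Rightarrow> real) \<Rightarrow> ('a \<Rightarrow> real) \<Rightarrow> bool" where
  "is_PL_maximizer M N r \<epsilon> K pt q \<longleftrightarrow>
     q \<in> dens_set M \<and> (\<forall>q'\<in>dens_set M. PL_obj M N r \<epsilon> K pt q' \<le> PL_obj M N r \<epsilon> K pt q)"

end

theory Submission
  imports Defs
begin

text \<open>
  Write \<open>H\<close> for the choice kernel of the current density \<open>p\<close> and \<open>f = p H\<close>.
  The \<open>K\<close> candidates are exchangeable, so for every \<open>F \<ge> 0\<close> the expectation of
  \<open>\<Sum>\<^sub>k P(I = k | X, \<epsilon>) F(X\<^sub>k)\<close> is \<open>K\<close> times the term of the last candidate;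
  integrating out the other candidates and all noises turns it into \<open>\<integral> f F d\<pi>\<close>.
  With \<open>F = 1\<close> this shows that \<open>f\<close> is a probability density, and with \<open>F = log q\<close>
  (split into positive and negative parts) that the objective is \<open>\<integral> f log q d\<pi>\<close>.
  Gibbs' inequality \<open>\<integral> f log q \<le> \<integral> f log f\<close>, with equality only for \<open>q = f\<close> a.e.,
  makes \<open>f\<close> the unique maximizer. Since \<open>0 \<le> H \<le> K\<close>, \<open>f |log f|\<close> is integrable
  whenever \<open>p |log p|\<close> is, so the argument applies at every step of the iteration.
\<close>

section \<open>Gibbs' inequality\<close>

(* elog y = log_pos y - log_neg y, where log_neg y = \<infinity> exactly when elog y = -\<infinity>. *)
definition log_pos :: "real \<Rightarrow> ennreal" where
  "log_pos y = (if 0 < y then ennreal (ln y) else 0)"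

definition log_neg :: "real \<Rightarrow> ennreal" where
  "log_neg y = (if 0 < y then ennreal (- ln y) else \<infinity>)"

lemma log_pos_measurable[measurable]: "log_pos \<in> borel_measurable borel"
  unfolding log_pos_def by measurable

lemma log_neg_measurable[measurable]: "log_neg \<in> borel_measurable borel"
  unfolding log_neg_def by measurable

lemma ennreal_mult_abs_ln:
  fixes p :: real
  assumes "0 \<le> p"
  shows "ennreal (p * \<bar>ln p\<bar>) = ennreal p * log_pos p + ennreal p * log_neg p"
proof (cases "p = 0")
  case False
  with assms have "0 < p" by simp
  then show ?thesis
    by (cases "0 \<le> ln p") (simp_all add: log_pos_def log_neg_def ennreal_neg flip: ennreal_mult)
qed (simp add: log_pos_def log_neg_def)

lemma mult_ln_le:
  fixes f q :: real
  assumes "0 < f" "0 < q"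
  shows "f * ln q \<le> f * ln f + q - f"
proof -
  have "f * ln (q / f) \<le> f * (q / f - 1)"
    using assms by (intro mult_left_mono ln_le_minus_one) auto
  moreover have "f * ln (q / f) = f * ln q - f * ln f" "f * (q / f - 1) = q - f"
    using assms by (simp_all add: ln_div field_simps)
  ultimately show ?thesis
    by simp
qed

lemma mult_ln_eq_imp_eq:
  fixes f q :: real
  assumes "0 < f" "0 < q" "f * ln q = f * ln f + q - f"
  shows "q = f"
proof -
  have "ln (q / f) = q / f - 1"
    using assms by (simp add: ln_div field_simps)
  then have "q / f = 1"
    using assms by (intro ln_eq_minus_one) auto
  then show ?thesis
    using assms by simp
qed

lemma log_parts_pos:
  fixes y :: real
  assumes "0 < y"
  shows "log_pos y = ennreal (max 0 (ln y))" "log_neg y = ennreal (max 0 (- ln y))"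
  using assms by (simp_all add: log_pos_def log_neg_def)

lemma mult_log_pos_le:
  fixes f q :: real
  assumes "0 \<le> f" "0 \<le> q"
  shows "ennreal f * log_pos q \<le> ennreal f * log_pos f + ennreal q"
proof (cases "0 < f \<and> 0 < q")
  case True
  then have "f * ln q \<le> f * ln f + q - f"
    by (intro mult_ln_le) auto
  moreover have "f * ln f \<le> f * max 0 (ln f)"
    using True by (intro mult_left_mono) auto
  ultimately have "f * ln q \<le> f * max 0 (ln f) + q"
    using True by linarith
  moreover have "0 \<le> f * max 0 (ln f) + q"
    using True by simp
  ultimately have "f * max 0 (ln q) \<le> f * max 0 (ln f) + q"
    by (cases "0 \<le> ln q") (simp_all add: max_def)
  then show ?thesis
    using True by (simp add: log_parts_pos ennreal_leI del: ennreal_max_0 flip: ennreal_mult ennreal_plus)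
next
  case False
  with assms have "f = 0 \<or> q = 0" by auto
  then show ?thesis by (auto simp: log_pos_def)
qed

(* f ln q \<le> f ln f + q - f, rearranged so that both sides are sums of nonnegative terms. *)
lemma
  fixes f q :: real
  assumes "0 \<le> f" "0 \<le> q"
  shows mult_log_parts_le: "ennreal f * log_pos q + ennreal f * log_neg f + ennreal f
      \<le> ennreal f * log_pos f + ennreal f * log_neg q + ennreal q"
    and mult_log_parts_eq_imp_eq: "ennreal f * log_pos q + ennreal f * log_neg f + ennreal f
      = ennreal f * log_pos f + ennreal f * log_neg q + ennreal q \<Longrightarrow> q = f"
proof -
  let ?L = "ennreal f * log_pos q + ennreal f * log_neg f + ennreal f"
  let ?R = "ennreal f * log_pos f + ennreal f * log_neg q + ennreal q"
  consider "f = 0" | "0 < f" "q = 0" | "0 < f" "0 < q"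
    using assms by linarith
  then have "?L \<le> ?R \<and> (?L = ?R \<longrightarrow> q = f)"
  proof cases
    case 3
    define a where "a = f * max 0 (ln q) + f * max 0 (- ln f) + f"
    define b where "b = f * max 0 (ln f) + f * max 0 (- ln q) + q"
    have ab: "?L = ennreal a" "?R = ennreal b"
      using 3 by (simp_all add: a_def b_def log_parts_pos del: ennreal_max_0 flip: ennreal_mult ennreal_plus)
    have split: "max 0 x - max 0 (- x) = x" for x :: real
      by (simp add: max_def)
    have "a - b = f * (max 0 (ln q) - max 0 (- ln q)) - f * (max 0 (ln f) - max 0 (- ln f)) + f - q"
      unfolding a_def b_def by (simp add: algebra_simps)
    then have diff: "a - b = f * ln q - (f * ln f + q - f)"
      unfolding split by simp
    have "0 \<le> a" "0 \<le> b"
      using 3 by (simp_all add: a_def b_def)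
    have "?L \<le> ?R"
      unfolding ab using diff mult_ln_le[OF 3] by (intro ennreal_leI) linarith
    moreover have "q = f" if "?L = ?R"
    proof (rule mult_ln_eq_imp_eq[OF 3])
      have "a = b"
        using that \<open>0 \<le> a\<close> \<open>0 \<le> b\<close> unfolding ab by simp
      then show "f * ln q = f * ln f + q - f"
        using diff by simp
    qed
    ultimately show ?thesis
      by blast
  qed (use assms in \<open>auto simp: log_pos_def log_neg_def ennreal_mult_top ennreal_mult_eq_top_iff\<close>)
  then show "?L \<le> ?R" "?L = ?R \<Longrightarrow> q = f"
    by auto
qed

lemma enn2ereal_diff_le_iff:
  fixes a b c d :: ennreal
  assumes "a < \<top>" "c < \<top>"
  shows "enn2ereal a - enn2ereal b \<le> enn2ereal c - enn2ereal d \<longleftrightarrow> a + d \<le> c + b"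
  using assms
  by (cases a rule: ennreal_cases; cases b rule: ennreal_cases; cases c rule: ennreal_cases;
      cases d rule: ennreal_cases) (auto simp: top_unique simp flip: ennreal_plus)

lemma enn2ereal_diff_eq_iff:
  fixes a b c d :: ennreal
  assumes "a < \<top>" "c < \<top>"
  shows "enn2ereal a - enn2ereal b = enn2ereal c - enn2ereal d \<longleftrightarrow> a + d = c + b"
  using assms
  by (cases a rule: ennreal_cases; cases b rule: ennreal_cases; cases c rule: ennreal_cases;
      cases d rule: ennreal_cases) (auto simp flip: ennreal_plus)

(* The integral of f ln q; ereal subtraction makes it a junk value when both parts are infinite. *)
definition log_integral :: "'a measure \<Rightarrow> ('a \<Rightarrow> real) \<Rightarrow> ('a \<Rightarrow> real) \<Rightarrow> ereal" where
  "log_integral M f q =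
     enn2ereal (\<integral>\<^sup>+x. ennreal (f x) * log_pos (q x) \<partial>M)
   - enn2ereal (\<integral>\<^sup>+x. ennreal (f x) * log_neg (q x) \<partial>M)"

definition finite_entropy_density :: "'a measure \<Rightarrow> ('a \<Rightarrow> real) \<Rightarrow> bool" where
  "finite_entropy_density M p \<longleftrightarrow> p \<in> dens_set M \<and> (\<integral>\<^sup>+x. ennreal (p x * \<bar>ln (p x)\<bar>) \<partial>M) < \<infinity>"

lemma nn_integral_mult_log_parts_finite:
  assumes f0: "\<And>x. x \<in> space M \<Longrightarrow> 0 \<le> f x"
    and ent: "(\<integral>\<^sup>+x. ennreal (f x * \<bar>ln (f x)\<bar>) \<partial>M) < \<infinity>"
  shows "(\<integral>\<^sup>+x. ennreal (f x) * log_pos (f x) \<partial>M) < \<infinity>"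
    and "(\<integral>\<^sup>+x. ennreal (f x) * log_neg (f x) \<partial>M) < \<infinity>"
proof -
  have "(\<integral>\<^sup>+x. ennreal (f x) * log_pos (f x) \<partial>M) \<le> (\<integral>\<^sup>+x. ennreal (f x * \<bar>ln (f x)\<bar>) \<partial>M)"
    "(\<integral>\<^sup>+x. ennreal (f x) * log_neg (f x) \<partial>M) \<le> (\<integral>\<^sup>+x. ennreal (f x * \<bar>ln (f x)\<bar>) \<partial>M)"
    by (auto intro!: nn_integral_mono simp: ennreal_mult_abs_ln f0)
  with ent show "(\<integral>\<^sup>+x. ennreal (f x) * log_pos (f x) \<partial>M) < \<infinity>"
    "(\<integral>\<^sup>+x. ennreal (f x) * log_neg (f x) \<partial>M) < \<infinity>"
    by (auto dest: order.strict_trans1)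
qed

lemma nn_integral_mult_log_pos_finite:
  assumes f: "finite_entropy_density M f" and q: "q \<in> dens_set M"
  shows "(\<integral>\<^sup>+x. ennreal (f x) * log_pos (q x) \<partial>M) < \<infinity>"
proof -
  have [measurable]: "f \<in> borel_measurable M" "q \<in> borel_measurable M"
    and f0: "\<And>x. x \<in> space M \<Longrightarrow> 0 \<le> f x" and q0: "\<And>x. x \<in> space M \<Longrightarrow> 0 \<le> q x"
    and q1: "(\<integral>\<^sup>+x. ennreal (q x) \<partial>M) = 1"
    and ent: "(\<integral>\<^sup>+x. ennreal (f x * \<bar>ln (f x)\<bar>) \<partial>M) < \<infinity>"
    using f q by (auto simp: finite_entropy_density_def dens_set_def)
  have "(\<integral>\<^sup>+x. ennreal (f x) * log_pos (q x) \<partial>M)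
      \<le> (\<integral>\<^sup>+x. ennreal (f x) * log_pos (f x) + ennreal (q x) \<partial>M)"
    by (intro nn_integral_mono mult_log_pos_le f0 q0)
  also have "\<dots> = (\<integral>\<^sup>+x. ennreal (f x) * log_pos (f x) \<partial>M) + 1"
    by (simp add: nn_integral_add q1)
  also have "\<dots> < \<infinity>"
    using nn_integral_mult_log_parts_finite(1)[OF f0 ent] by (simp add: less_top)
  finally show ?thesis .
qed

lemma AE_eq_if_nn_integral_eq:
  assumes [measurable]: "f \<in> borel_measurable M" "g \<in> borel_measurable M"
    and le: "AE x in M. f x \<le> g x"
    and eq: "(\<integral>\<^sup>+x. f x \<partial>M) = (\<integral>\<^sup>+x. g x \<partial>M)" and fin: "(\<integral>\<^sup>+x. f x \<partial>M) \<noteq> \<infinity>"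
  shows "AE x in M. f x = g x"
proof -
  have "AE x in M. g x \<le> f x"
    using nn_integral_less[OF _ _ fin le] eq by (metis assms(1,2) less_irrefl)
  with le show ?thesis
    by eventually_elim simp
qed

lemma
  assumes f: "finite_entropy_density M f" and q: "q \<in> dens_set M"
  shows gibbs_inequality: "log_integral M f q \<le> log_integral M f f"
    and log_integral_eq_self_imp_AE_eq: "log_integral M f q = log_integral M f f \<Longrightarrow> AE x in M. q x = f x"
proof -
  have [measurable]: "f \<in> borel_measurable M" "q \<in> borel_measurable M"
    and f0: "\<And>x. x \<in> space M \<Longrightarrow> 0 \<le> f x" and q0: "\<And>x. x \<in> space M \<Longrightarrow> 0 \<le> q x"
    and f1: "(\<integral>\<^sup>+x. ennreal (f x) \<partial>M) = 1" and q1: "(\<integral>\<^sup>+x. ennreal (q x) \<partial>M) = 1"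
    and ent: "(\<integral>\<^sup>+x. ennreal (f x * \<bar>ln (f x)\<bar>) \<partial>M) < \<infinity>"
    using f q by (auto simp: finite_entropy_density_def dens_set_def)
  define a where "a = (\<integral>\<^sup>+x. ennreal (f x) * log_pos (q x) \<partial>M)"
  define b where "b = (\<integral>\<^sup>+x. ennreal (f x) * log_neg (q x) \<partial>M)"
  define c where "c = (\<integral>\<^sup>+x. ennreal (f x) * log_pos (f x) \<partial>M)"
  define d where "d = (\<integral>\<^sup>+x. ennreal (f x) * log_neg (f x) \<partial>M)"
  define L where "L x = ennreal (f x) * log_pos (q x) + ennreal (f x) * log_neg (f x) + ennreal (f x)" for x
  define R where "R x = ennreal (f x) * log_pos (f x) + ennreal (f x) * log_neg (q x) + ennreal (q x)" for x
  have fin: "a < \<infinity>" "c < \<infinity>" "d < \<infinity>"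
    unfolding a_def c_def d_def
    using nn_integral_mult_log_pos_finite[OF f q] nn_integral_mult_log_parts_finite[OF f0 ent]
    by auto
  have [measurable]: "L \<in> borel_measurable M" "R \<in> borel_measurable M"
    unfolding L_def R_def by measurable
  have int_L: "(\<integral>\<^sup>+x. L x \<partial>M) = a + d + 1"
    unfolding L_def a_def d_def f1[symmetric] by (simp add: nn_integral_add)
  have int_R: "(\<integral>\<^sup>+x. R x \<partial>M) = c + b + 1"
    unfolding R_def c_def b_def q1[symmetric] by (simp add: nn_integral_add)
  have L_le_R: "AE x in M. L x \<le> R x"
    unfolding L_def R_def by (intro AE_I2 mult_log_parts_le f0 q0)
  have "a + d + 1 \<le> c + b + 1"
    unfolding int_L[symmetric] int_R[symmetric] by (rule nn_integral_mono_AE[OF L_le_R])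
  then show "log_integral M f q \<le> log_integral M f f"
    unfolding log_integral_def a_def[symmetric] b_def[symmetric] c_def[symmetric] d_def[symmetric]
    using fin by (simp add: enn2ereal_diff_le_iff)
  assume "log_integral M f q = log_integral M f f"
  then have "a + d = c + b"
    unfolding log_integral_def a_def[symmetric] b_def[symmetric] c_def[symmetric] d_def[symmetric]
    using fin by (simp add: enn2ereal_diff_eq_iff)
  then have "AE x in M. L x = R x"
    using fin by (intro AE_eq_if_nn_integral_eq L_le_R) (auto simp: int_L int_R)
  then show "AE x in M. q x = f x"
    using AE_space by eventually_elim (auto simp: L_def R_def intro: mult_log_parts_eq_imp_eq[OF f0 q0])
qed

section \<open>Expectations of extended logarithms\<close>

lemma e2ennreal_elog_mult:
  fixes h y :: real
  assumes "0 \<le> h"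
  shows "e2ennreal (elog y * ereal h) = ennreal h * log_pos y"
    and "e2ennreal (- (elog y * ereal h)) = ennreal h * log_neg y"
  using assms ennreal_mult'[of h "ln y"] ennreal_mult'[of h "- ln y"]
  by (cases "0 < y"; cases "h = 0";
      simp add: elog_def log_pos_def log_neg_def e2ennreal_neg mult.commute)+

lemma elog_measurable[measurable]: "elog \<in> borel_measurable borel"
  unfolding elog_def by measurable

lemma eexp_density_elog_mult:
  assumes [measurable]: "p \<in> borel_measurable M" "H \<in> borel_measurable M" "q \<in> borel_measurable M"
    and p0: "\<And>x. x \<in> space M \<Longrightarrow> 0 \<le> p x" and H0: "\<And>x. x \<in> space M \<Longrightarrow> 0 \<le> H x"
  shows "eexp (density M (\<lambda>x. ennreal (p x))) (\<lambda>x. elog (q x) * ereal (H x))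
    = log_integral M (\<lambda>x. p x * H x) q"
  unfolding eexp_def log_integral_def
  by (subst (1 2) nn_integral_density)
     (auto intro!: arg_cong2[where f="\<lambda>a b. enn2ereal a - enn2ereal b"] nn_integral_cong
       simp: e2ennreal_elog_mult p0 H0 ennreal_mult mult.assoc)

lemma eexp_eq_diff_nn_integral:
  assumes [measurable]: "S \<in> borel_measurable M" "a \<in> borel_measurable M" "b \<in> borel_measurable M"
    and parts: "\<And>x. e2ennreal (S x) + b x = a x + e2ennreal (- S x)"
    and pos_le: "\<And>x. e2ennreal (S x) \<le> a x"
    and fin: "(\<integral>\<^sup>+x. a x \<partial>M) < \<infinity>"
  shows "eexp M S = enn2ereal (\<integral>\<^sup>+x. a x \<partial>M) - enn2ereal (\<integral>\<^sup>+x. b x \<partial>M)"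
proof -
  have "(\<integral>\<^sup>+x. e2ennreal (S x) \<partial>M) + (\<integral>\<^sup>+x. b x \<partial>M)
      = (\<integral>\<^sup>+x. a x \<partial>M) + (\<integral>\<^sup>+x. e2ennreal (- S x) \<partial>M)"
    by (simp add: parts flip: nn_integral_add)
  moreover have "(\<integral>\<^sup>+x. e2ennreal (S x) \<partial>M) < \<infinity>"
    using nn_integral_mono[OF pos_le] fin by (rule order.strict_trans1)
  ultimately show ?thesis
    unfolding eexp_def using fin by (subst enn2ereal_diff_eq_iff) (auto simp: ac_simps)
qed

lemma ereal_sum_eq_MInfty:
  fixes g :: "'i \<Rightarrow> ereal"
  assumes "finite I" "j \<in> I" "g j = -\<infinity>" "\<And>k. k \<in> I \<Longrightarrow> g k \<noteq> \<infinity>"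
  shows "sum g I = -\<infinity>"
proof -
  have "sum g (I - {j}) \<noteq> \<infinity>"
    using assms by (subst sum_Pinfty) auto
  then show ?thesis
    using assms by (simp add: sum.remove)
qed

lemma e2ennreal_sum_mult_elog:
  fixes w y :: "'i \<Rightarrow> real"
  assumes I: "finite I" and w: "\<And>k. k \<in> I \<Longrightarrow> 0 < w k"
  defines "S \<equiv> \<Sum>k\<in>I. ereal (w k) * elog (y k)"
  shows "e2ennreal S + (\<Sum>k\<in>I. ennreal (w k) * log_neg (y k))
      = (\<Sum>k\<in>I. ennreal (w k) * log_pos (y k)) + e2ennreal (- S)"
    and "e2ennreal S \<le> (\<Sum>k\<in>I. ennreal (w k) * log_pos (y k))"
proof -
  have "e2ennreal S + (\<Sum>k\<in>I. ennreal (w k) * log_neg (y k))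
      = (\<Sum>k\<in>I. ennreal (w k) * log_pos (y k)) + e2ennreal (- S)
    \<and> e2ennreal S \<le> (\<Sum>k\<in>I. ennreal (w k) * log_pos (y k))"
  proof (cases "\<forall>k\<in>I. 0 < y k")
    case True
    define A where "A = (\<Sum>k\<in>I. w k * max 0 (ln (y k)))"
    define B where "B = (\<Sum>k\<in>I. w k * max 0 (- ln (y k)))"
    have "0 \<le> A" "0 \<le> B"
      unfolding A_def B_def using w by (auto intro!: sum_nonneg simp: less_imp_le)
    have "S = ereal (\<Sum>k\<in>I. w k * ln (y k))"
      unfolding S_def using True by (simp add: elog_def)
    also have "(\<Sum>k\<in>I. w k * ln (y k)) = A - B"
      unfolding A_def B_def sum_subtractf[symmetric]
      by (intro sum.cong) (auto simp: max_def algebra_simps)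
    finally have S: "S = ereal (A - B)" .
    have "(\<Sum>k\<in>I. ennreal (w k) * log_pos (y k)) = ennreal A"
      "(\<Sum>k\<in>I. ennreal (w k) * log_neg (y k)) = ennreal B"
      unfolding A_def B_def using True w
      by (auto intro!: sum.cong simp: log_parts_pos ennreal_mult less_imp_le
          simp del: ennreal_max_0 simp flip: sum_ennreal)
    with S \<open>0 \<le> A\<close> \<open>0 \<le> B\<close> show ?thesis
      by (cases "A \<le> B") (simp_all add: ennreal_neg flip: ennreal_plus)
  next
    case False
    then obtain j where j: "j \<in> I" "y j \<le> 0"
      by auto
    have "ereal (w k) * elog (y k) \<noteq> \<infinity>" if "k \<in> I" for k
      using w[OF that] by (simp add: elog_def)
    then have "S = -\<infinity>"
      unfolding S_def using I j w[of j] by (intro ereal_sum_eq_MInfty[of _ j]) (auto simp: elog_def)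
    moreover have "(\<Sum>k\<in>I. ennreal (w k) * log_neg (y k)) = \<infinity>"
      using I j w[of j] by (simp add: sum.remove log_neg_def)
    ultimately show ?thesis
      by (simp add: e2ennreal_neg)
  qed
  then show "e2ennreal S + (\<Sum>k\<in>I. ennreal (w k) * log_neg (y k))
      = (\<Sum>k\<in>I. ennreal (w k) * log_pos (y k)) + e2ennreal (- S)"
    and "e2ennreal S \<le> (\<Sum>k\<in>I. ennreal (w k) * log_pos (y k))"
    by auto
qed

section \<open>Entropy of a bounded reweighting\<close>

lemma mult_abs_ln_le:
  fixes h k :: real
  assumes "0 < h" "h \<le> k" "1 \<le> k"
  shows "h * \<bar>ln h\<bar> \<le> k * ln k + 1"
proof (cases "h \<le> 1")
  case True
  have "h * ln (1 / h) \<le> h * (1 / h - 1)"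
    using assms by (intro mult_left_mono ln_le_minus_one) auto
  moreover have "ln (1 / h) = \<bar>ln h\<bar>" "h * (1 / h - 1) = 1 - h"
    using True assms by (simp_all add: ln_div field_simps)
  ultimately have "h * \<bar>ln h\<bar> \<le> 1 - h"
    by simp
  moreover have "0 \<le> k * ln k"
    using assms by simp
  ultimately show ?thesis
    using assms by linarith
next
  case False
  then have "h * \<bar>ln h\<bar> \<le> k * ln k"
    using assms by (simp add: mult_mono)
  then show ?thesis
    by simp
qed

lemma mult_abs_ln_mult_le:
  fixes p h k :: real
  assumes "0 \<le> p" "0 \<le> h" "h \<le> k" "1 \<le> k"
  shows "p * h * \<bar>ln (p * h)\<bar> \<le> k * (p * \<bar>ln p\<bar>) + (k * ln k + 1) * p"
proof (cases "p = 0 \<or> h = 0")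
  case False
  with assms have "0 < p" "0 < h" by auto
  then have "p * h * \<bar>ln (p * h)\<bar> \<le> p * h * (\<bar>ln p\<bar> + \<bar>ln h\<bar>)"
    by (intro mult_left_mono) (auto simp: ln_mult)
  also have "\<dots> = h * (p * \<bar>ln p\<bar>) + p * (h * \<bar>ln h\<bar>)"
    by (simp add: algebra_simps)
  also have "\<dots> \<le> k * (p * \<bar>ln p\<bar>) + p * (k * ln k + 1)"
    using assms \<open>0 < h\<close> mult_abs_ln_le[of h k]
    by (intro add_mono mult_right_mono mult_left_mono) auto
  finally show ?thesis
    by (simp add: mult.commute)
next
  case True
  have "0 \<le> k * ln k"
    using assms by simp
  with True assms show ?thesis
    by auto
qed

lemma nn_integral_entropy_mult_finite:
  fixes k :: real
  assumes p: "finite_entropy_density M p"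
    and [measurable]: "H \<in> borel_measurable M"
    and H0: "\<And>x. x \<in> space M \<Longrightarrow> 0 \<le> H x" and Hk: "\<And>x. x \<in> space M \<Longrightarrow> H x \<le> k"
    and k: "1 \<le> k"
  shows "(\<integral>\<^sup>+x. ennreal (p x * H x * \<bar>ln (p x * H x)\<bar>) \<partial>M) < \<infinity>"
proof -
  have [measurable]: "p \<in> borel_measurable M" and p0: "\<And>x. x \<in> space M \<Longrightarrow> 0 \<le> p x"
    and p1: "(\<integral>\<^sup>+x. ennreal (p x) \<partial>M) = 1"
    and ent: "(\<integral>\<^sup>+x. ennreal (p x * \<bar>ln (p x)\<bar>) \<partial>M) < \<infinity>"
    using p by (auto simp: finite_entropy_density_def dens_set_def)
  have "0 \<le> k * ln k"
    using k by simp
  then have "(\<integral>\<^sup>+x. ennreal (p x * H x * \<bar>ln (p x * H x)\<bar>) \<partial>M)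
      \<le> (\<integral>\<^sup>+x. ennreal k * ennreal (p x * \<bar>ln (p x)\<bar>) + ennreal (k * ln k + 1) * ennreal (p x) \<partial>M)"
    using k p0 H0 Hk
    by (intro nn_integral_mono)
       (simp add: mult_abs_ln_mult_le ennreal_leI flip: ennreal_mult ennreal_plus)
  also have "\<dots> = ennreal k * (\<integral>\<^sup>+x. ennreal (p x * \<bar>ln (p x)\<bar>) \<partial>M) + ennreal (k * ln k + 1)"
    by (simp add: nn_integral_add nn_integral_cmult p1)
  also have "\<dots> < \<infinity>"
    using ent by (simp add: ennreal_mult_less_top less_top)
  finally show ?thesis .
qed

section \<open>Finite products of probability spaces\<close>

lemma prob_space_density_dens_set:
  assumes "p \<in> dens_set M"
  shows "prob_space (density M (\<lambda>x. ennreal (p x)))"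
proof (rule prob_spaceI)
  have [measurable]: "p \<in> borel_measurable M" and p1: "(\<integral>\<^sup>+x. ennreal (p x) \<partial>M) = 1"
    using assms by (auto simp: dens_set_def)
  have "emeasure (density M (\<lambda>x. ennreal (p x))) (space M) = (\<integral>\<^sup>+x. ennreal (p x) * indicator (space M) x \<partial>M)"
    by (rule emeasure_density) auto
  also have "\<dots> = 1"
    using p1 by (simp cong: nn_integral_cong)
  finally show "emeasure (density M (\<lambda>x. ennreal (p x))) (space (density M (\<lambda>x. ennreal (p x)))) = 1"
    by simp
qed

lemma nn_integral_PiM_pair_permute:
  assumes P: "prob_space P" and N: "prob_space N" and \<sigma>: "bij_betw \<sigma> I I"
    and [measurable]: "G \<in> borel_measurable (PiM I (\<lambda>_. P) \<Otimes>\<^sub>M PiM I (\<lambda>_. N))"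
  shows "(\<integral>\<^sup>+z. G z \<partial>(PiM I (\<lambda>_. P) \<Otimes>\<^sub>M PiM I (\<lambda>_. N)))
     = (\<integral>\<^sup>+z. G (\<lambda>n\<in>I. fst z (\<sigma> n), \<lambda>n\<in>I. snd z (\<sigma> n)) \<partial>(PiM I (\<lambda>_. P) \<Otimes>\<^sub>M PiM I (\<lambda>_. N)))"
proof -
  let ?PI = "PiM I (\<lambda>_. P)" and ?NI = "PiM I (\<lambda>_. N)"
  let ?T = "\<lambda>\<omega>. \<lambda>n\<in>I. \<omega> (\<sigma> n)"
  have inj: "inj_on \<sigma> I" and into: "\<sigma> \<in> I \<rightarrow> I"
    using \<sigma> by (auto simp: bij_betw_def)
  have TP: "?T \<in> ?PI \<rightarrow>\<^sub>M ?PI" and TN: "?T \<in> ?NI \<rightarrow>\<^sub>M ?NI"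
    using into by (auto intro!: measurable_restrict measurable_component_singleton)
  have "distr ?PI ?PI ?T = ?PI" "distr ?NI ?NI ?T = ?NI"
    using distr_PiM_reindex[of I "\<lambda>_. P" \<sigma> I] distr_PiM_reindex[of I "\<lambda>_. N" \<sigma> I] P N inj into
    by simp_all
  moreover have "sigma_finite_measure ?NI"
    using N by (intro prob_space_imp_sigma_finite prob_space_PiM)
  ultimately have "?PI \<Otimes>\<^sub>M ?NI = distr (?PI \<Otimes>\<^sub>M ?NI) (?PI \<Otimes>\<^sub>M ?NI) (\<lambda>(x, y). (?T x, ?T y))"
    using pair_measure_distr[OF TP TN] by simp
  then have "integral\<^sup>N (?PI \<Otimes>\<^sub>M ?NI) G
      = integral\<^sup>N (distr (?PI \<Otimes>\<^sub>M ?NI) (?PI \<Otimes>\<^sub>M ?NI) (\<lambda>(x, y). (?T x, ?T y))) G"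
    by (rule arg_cong)
  also have "\<dots> = (\<integral>\<^sup>+z. G ((\<lambda>(x, y). (?T x, ?T y)) z) \<partial>(?PI \<Otimes>\<^sub>M ?NI))"
    using TP TN by (intro nn_integral_distr) (auto simp: split_beta')
  finally show ?thesis
    by (simp add: split_beta')
qed

lemma nn_integral_PiM_pair_insert:
  assumes P: "prob_space P" and N: "prob_space N" and I: "finite I" "i \<notin> I"
    and G[measurable]: "G \<in> borel_measurable (PiM (insert i I) (\<lambda>_. P) \<Otimes>\<^sub>M PiM (insert i I) (\<lambda>_. N))"
  shows "(\<integral>\<^sup>+z. G z \<partial>(PiM (insert i I) (\<lambda>_. P) \<Otimes>\<^sub>M PiM (insert i I) (\<lambda>_. N)))
     = (\<integral>\<^sup>+x. \<integral>\<^sup>+xs. \<integral>\<^sup>+es. \<integral>\<^sup>+e. G (xs(i := x), es(i := e)) \<partial>N \<partial>PiM I (\<lambda>_. N) \<partial>PiM I (\<lambda>_. P) \<partial>P)"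
proof -
  let ?PI = "PiM (insert i I) (\<lambda>_. P)" and ?NI = "PiM (insert i I) (\<lambda>_. N)"
  interpret PP: product_sigma_finite "\<lambda>_. P"
    using P by (simp add: product_sigma_finite_def prob_space_imp_sigma_finite)
  interpret NN: product_sigma_finite "\<lambda>_. N"
    using N by (simp add: product_sigma_finite_def prob_space_imp_sigma_finite)
  interpret NI: sigma_finite_measure ?NI
    using N by (intro prob_space_imp_sigma_finite prob_space_PiM)
  have "(\<integral>\<^sup>+z. G z \<partial>(?PI \<Otimes>\<^sub>M ?NI)) = (\<integral>\<^sup>+xs. \<integral>\<^sup>+es. G (xs, es) \<partial>?NI \<partial>?PI)"
    by (rule NI.nn_integral_fst[symmetric]) measurable
  also have "\<dots> = (\<integral>\<^sup>+x. \<integral>\<^sup>+xs. \<integral>\<^sup>+es. G (xs(i := x), es) \<partial>?NI \<partial>PiM I (\<lambda>_. P) \<partial>P)"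
    using I by (intro PP.product_nn_integral_insert_rev NI.borel_measurable_nn_integral_fst G)
  also have "\<dots> = (\<integral>\<^sup>+x. \<integral>\<^sup>+xs. \<integral>\<^sup>+es. \<integral>\<^sup>+e. G (xs(i := x), es(i := e)) \<partial>N \<partial>PiM I (\<lambda>_. N) \<partial>PiM I (\<lambda>_. P) \<partial>P)"
  proof (intro nn_integral_cong)
    fix x xs
    assume "x \<in> space P" "xs \<in> space (PiM I (\<lambda>_. P))"
    then have "xs(i := x) \<in> space ?PI"
      using I by (intro measurable_space[OF measurable_component_update]) auto
    then show "(\<integral>\<^sup>+es. G (xs(i := x), es) \<partial>?NI)
        = (\<integral>\<^sup>+es. \<integral>\<^sup>+e. G (xs(i := x), es(i := e)) \<partial>N \<partial>PiM I (\<lambda>_. N))"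
      using I by (intro NN.product_nn_integral_insert measurable_compose_Pair1[OF _ G])
  qed
  finally show ?thesis .
qed

lemma nn_integral_pair_measure_nested:
  assumes "sigma_finite_measure A" "sigma_finite_measure B" "sigma_finite_measure C"
    and f[measurable]: "f \<in> borel_measurable (A \<Otimes>\<^sub>M (B \<Otimes>\<^sub>M C))"
  shows "(\<integral>\<^sup>+\<omega>. f \<omega> \<partial>(A \<Otimes>\<^sub>M (B \<Otimes>\<^sub>M C))) = (\<integral>\<^sup>+c. \<integral>\<^sup>+b. \<integral>\<^sup>+a. f (a, b, c) \<partial>A \<partial>B \<partial>C)"
proof -
  interpret BC: pair_sigma_finite B C
    using assms by (simp add: pair_sigma_finite_def)
  interpret ABC: pair_sigma_finite A "B \<Otimes>\<^sub>M C"
    using assms by (simp add: pair_sigma_finite_def BC.sigma_finite_measure_axioms)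
  have "(\<integral>\<^sup>+\<omega>. f \<omega> \<partial>(A \<Otimes>\<^sub>M (B \<Otimes>\<^sub>M C))) = (\<integral>\<^sup>+bc. \<integral>\<^sup>+a. f (a, bc) \<partial>A \<partial>(B \<Otimes>\<^sub>M C))"
    by (rule ABC.nn_integral_snd[symmetric]) measurable
  also have "\<dots> = (\<integral>\<^sup>+c. \<integral>\<^sup>+b. \<integral>\<^sup>+a. f (a, b, c) \<partial>A \<partial>B \<partial>C)"
    by (subst BC.nn_integral_snd[symmetric]) simp_all
  finally show ?thesis .
qed

section \<open>The Plackett-Luce choice model\<close>

locale plackett_luce =
  fixes M :: "'a measure" and N :: "'w measure" and r :: "'a \<Rightarrow> real"
    and \<epsilon> :: "'w \<Rightarrow> 'a \<Rightarrow> real" and K :: nat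
  assumes r_measurable[measurable]: "r \<in> borel_measurable M"
    and prob_space_N: "prob_space N"
    and noise_measurable[measurable]: "(\<lambda>(\<omega>, x). \<epsilon> \<omega> x) \<in> borel_measurable (N \<Otimes>\<^sub>M M)"
    and two_le_K: "2 \<le> K"
begin

lemma r_measurable_density[measurable]: "r \<in> borel_measurable (density M p)"
  by (simp cong: measurable_cong_sets)

lemma noise_measurable_density[measurable]:
  "(\<lambda>(\<omega>, x). \<epsilon> \<omega> x) \<in> borel_measurable (N \<Otimes>\<^sub>M density M p)"
  using noise_measurable by (simp cong: measurable_cong_sets sets_pair_measure_cong)

abbreviation samples :: "('a \<Rightarrow> real) \<Rightarrow> ((nat \<Rightarrow> 'a) \<times> (nat \<Rightarrow> 'w)) measure" where
  "samples p \<equiv> PiM {..<K} (\<lambda>_. density M (\<lambda>x. ennreal (p x))) \<Otimes>\<^sub>M PiM {..<K} (\<lambda>_. N)"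

abbreviation rivals :: "('a \<Rightarrow> real) \<Rightarrow> ('w \<times> (nat \<Rightarrow> 'w) \<times> (nat \<Rightarrow> 'a)) measure" where
  "rivals p \<equiv> N \<Otimes>\<^sub>M (PiM {..<K - 1} (\<lambda>_. N) \<Otimes>\<^sub>M PiM {..<K - 1} (\<lambda>_. density M (\<lambda>y. ennreal (p y))))"

definition choice_prob :: "nat \<Rightarrow> (nat \<Rightarrow> 'a) \<Rightarrow> (nat \<Rightarrow> 'w) \<Rightarrow> real" where
  "choice_prob k xs es = exp (r (xs k) + \<epsilon> (es k) (xs k)) / (\<Sum>i<K. exp (r (xs i) + \<epsilon> (es i) (xs i)))"

definition choice_prob_against :: "'a \<Rightarrow> 'w \<times> (nat \<Rightarrow> 'w) \<times> (nat \<Rightarrow> 'a) \<Rightarrow> real" where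
  "choice_prob_against x = (\<lambda>(\<omega>, es, xs). exp (r x + \<epsilon> \<omega> x)
     / (exp (r x + \<epsilon> \<omega> x) + (\<Sum>k<K - 1. exp (r (xs k) + \<epsilon> (es k) (xs k)))))"

lemma lessThan_K_nonempty: "{..<K} \<noteq> {}"
  using two_le_K by (auto simp: lessThan_empty_iff)

lemma choice_prob_pos: "0 < choice_prob k xs es"
  unfolding choice_prob_def using lessThan_K_nonempty by (intro divide_pos_pos sum_pos) auto

lemma sum_choice_prob: "(\<Sum>k<K. choice_prob k xs es) = 1"
proof -
  have "0 < (\<Sum>i<K. exp (r (xs i) + \<epsilon> (es i) (xs i)))"
    using lessThan_K_nonempty by (intro sum_pos) auto
  then show ?thesis
    unfolding choice_prob_def by (simp flip: sum_divide_distrib)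
qed

lemma choice_prob_permute:
  assumes \<sigma>: "bij_betw \<sigma> {..<K} {..<K}" and k: "k < K"
  shows "choice_prob k (\<lambda>n\<in>{..<K}. xs (\<sigma> n)) (\<lambda>n\<in>{..<K}. es (\<sigma> n)) = choice_prob (\<sigma> k) xs es"
proof -
  have "(\<Sum>i<K. exp (r (xs (\<sigma> i)) + \<epsilon> (es (\<sigma> i)) (xs (\<sigma> i))))
      = (\<Sum>i<K. exp (r (xs i) + \<epsilon> (es i) (xs i)))"
    using sum.reindex_bij_betw[OF \<sigma>, of "\<lambda>i. exp (r (xs i) + \<epsilon> (es i) (xs i))"] .
  then show ?thesis
    using k unfolding choice_prob_def by simp
qed

lemma choice_prob_against_nonneg: "0 \<le> choice_prob_against x \<omega>"
  unfolding choice_prob_against_def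
  by (auto simp: split_beta intro!: divide_nonneg_pos add_pos_nonneg sum_nonneg)

lemma choice_prob_against_le_1: "choice_prob_against x \<omega> \<le> 1"
  unfolding choice_prob_against_def
  by (auto simp: split_beta intro!: divide_le_eq_1_pos[THEN iffD2] add_pos_nonneg sum_nonneg)

lemma choice_prob_update_last:
  assumes "K = Suc m"
  shows "choice_prob m (xs(m := x)) (es(m := e)) = choice_prob_against x (e, es, xs)"
proof -
  have K: "{..<K} = insert m {..<m}" "K - 1 = m"
    using assms by auto
  have "(\<Sum>i<m. exp (r ((xs(m := x)) i) + \<epsilon> ((es(m := e)) i) ((xs(m := x)) i)))
      = (\<Sum>i<m. exp (r (xs i) + \<epsilon> (es i) (xs i)))"
    by (intro sum.cong) auto
  then show ?thesis
    unfolding choice_prob_def choice_prob_against_def K by simp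
qed

lemma choice_kernel_eq_integral:
  "choice_kernel M N r \<epsilon> K p x = real K * (\<integral>\<omega>. choice_prob_against x \<omega> \<partial>rivals p)"
  unfolding choice_kernel_def choice_prob_against_def split_beta'
  by (simp del: times_divide_eq_right add: times_divide_eq_right[symmetric])

lemma prob_space_rivals:
  assumes "p \<in> dens_set M"
  shows "prob_space (rivals p)"
  using assms by (intro prob_space_pair prob_space_N prob_space_PiM prob_space_density_dens_set)

lemma choice_prob_against_measurable[measurable]:
  "(\<lambda>(x, \<omega>). choice_prob_against x \<omega>) \<in> borel_measurable (density M (\<lambda>x. ennreal (p x)) \<Otimes>\<^sub>M rivals p)"
  unfolding choice_prob_against_def by measurable

lemma choice_kernel_measurable:
  assumes "p \<in> dens_set M"
  shows "choice_kernel M N r \<epsilon> K p \<in> borel_measurable M"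
proof -
  interpret rivals: prob_space "rivals p"
    using assms by (rule prob_space_rivals)
  have "(\<lambda>x. \<integral>\<omega>. choice_prob_against x \<omega> \<partial>rivals p) \<in> borel_measurable (density M (\<lambda>x. ennreal (p x)))"
    by (rule rivals.borel_measurable_lebesgue_integral) measurable
  then show ?thesis
    unfolding choice_kernel_eq_integral[abs_def] by (simp cong: measurable_cong_sets)
qed

lemma choice_kernel_nonneg: "0 \<le> choice_kernel M N r \<epsilon> K p x"
  unfolding choice_kernel_eq_integral by (simp add: choice_prob_against_nonneg)

lemma
  assumes p: "p \<in> dens_set M" and x: "x \<in> space M"
  shows choice_kernel_le_K: "choice_kernel M N r \<epsilon> K p x \<le> real K"
    and ennreal_choice_kernel: "ennreal (choice_kernel M N r \<epsilon> K p x)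
      = of_nat K * (\<integral>\<^sup>+\<omega>. ennreal (choice_prob_against x \<omega>) \<partial>rivals p)"
proof -
  interpret rivals: prob_space "rivals p"
    using p by (rule prob_space_rivals)
  have "choice_prob_against x \<in> borel_measurable (rivals p)"
    using x unfolding choice_prob_against_def by measurable
  then have int: "integrable (rivals p) (choice_prob_against x)"
    by (intro rivals.integrable_const_bound[where B=1])
       (simp_all add: choice_prob_against_nonneg choice_prob_against_le_1)
  have "(\<integral>\<omega>. choice_prob_against x \<omega> \<partial>rivals p) \<le> 1"
    using int by (intro rivals.integral_le_const AE_I2 choice_prob_against_le_1)
  then show "choice_kernel M N r \<epsilon> K p x \<le> real K"
    unfolding choice_kernel_eq_integral by (simp add: mult_left_le)
  have "ennreal (choice_kernel M N r \<epsilon> K p x)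
      = of_nat K * ennreal (\<integral>\<omega>. choice_prob_against x \<omega> \<partial>rivals p)"
    unfolding choice_kernel_eq_integral by (simp add: ennreal_mult' ennreal_of_nat_eq_real_of_nat)
  also have "ennreal (\<integral>\<omega>. choice_prob_against x \<omega> \<partial>rivals p)
      = (\<integral>\<^sup>+\<omega>. ennreal (choice_prob_against x \<omega>) \<partial>rivals p)"
    using int by (simp add: nn_integral_eq_integral choice_prob_against_nonneg)
  finally show "ennreal (choice_kernel M N r \<epsilon> K p x)
      = of_nat K * (\<integral>\<^sup>+\<omega>. ennreal (choice_prob_against x \<omega>) \<partial>rivals p)" .
qed

lemma choice_prob_mult_measurable:
  assumes "k < K" and [measurable]: "F \<in> borel_measurable M"
  shows "(\<lambda>z. ennreal (choice_prob k (fst z) (snd z)) * F (fst z k)) \<in> borel_measurable (samples p)"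
proof -
  have "k \<in> {..<K}"
    using assms by simp
  moreover have [measurable]: "F \<in> borel_measurable (density M (\<lambda>x. ennreal (p x)))"
    by (simp cong: measurable_cong_sets)
  ultimately show ?thesis
    unfolding choice_prob_def by measurable
qed

lemma nn_integral_last_choice_prob:
  assumes p: "p \<in> dens_set M" and K: "K = Suc m" and F[measurable]: "F \<in> borel_measurable M"
  shows "(\<integral>\<^sup>+z. ennreal (choice_prob m (fst z) (snd z)) * F (fst z m) \<partial>samples p)
    = (\<integral>\<^sup>+x. (\<integral>\<^sup>+\<omega>. ennreal (choice_prob_against x \<omega>) \<partial>rivals p) * F x \<partial>density M (\<lambda>x. ennreal (p x)))"
proof -
  let ?P = "density M (\<lambda>x. ennreal (p x))"
  have P: "prob_space ?P"
    using p by (rule prob_space_density_dens_set)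
  have sf: "sigma_finite_measure N" "sigma_finite_measure (PiM {..<m} (\<lambda>_. N))"
    "sigma_finite_measure (PiM {..<m} (\<lambda>_. ?P))"
    using prob_space_N P by (auto intro: prob_space_imp_sigma_finite prob_space_PiM)
  have I: "{..<K} = insert m {..<m}" "K - 1 = m"
    using K by auto
  have "(\<lambda>z. ennreal (choice_prob m (fst z) (snd z)) * F (fst z m)) \<in> borel_measurable (samples p)"
    using K by (intro choice_prob_mult_measurable F) simp
  then have "(\<integral>\<^sup>+z. ennreal (choice_prob m (fst z) (snd z)) * F (fst z m) \<partial>samples p)
    = (\<integral>\<^sup>+x. \<integral>\<^sup>+xs. \<integral>\<^sup>+es. \<integral>\<^sup>+e. ennreal (choice_prob_against x (e, es, xs)) * F x
        \<partial>N \<partial>PiM {..<m} (\<lambda>_. N) \<partial>PiM {..<m} (\<lambda>_. ?P) \<partial>?P)"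
    unfolding I by (simp add: nn_integral_PiM_pair_insert P prob_space_N choice_prob_update_last[OF K])
  also have "\<dots> = (\<integral>\<^sup>+x. (\<integral>\<^sup>+\<omega>. ennreal (choice_prob_against x \<omega>) \<partial>rivals p) * F x \<partial>?P)"
  proof (intro nn_integral_cong)
    fix x
    assume "x \<in> space ?P"
    then have "x \<in> space M"
      by simp
    then have [measurable]: "(\<lambda>\<omega>. ennreal (choice_prob_against x \<omega>)) \<in> borel_measurable (rivals p)"
      unfolding choice_prob_against_def by measurable
    have "(\<integral>\<^sup>+\<omega>. ennreal (choice_prob_against x \<omega>) \<partial>rivals p) * F x
        = (\<integral>\<^sup>+\<omega>. ennreal (choice_prob_against x \<omega>) * F x \<partial>rivals p)"
      by (rule nn_integral_multc[symmetric]) measurable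
    also have "\<dots> = (\<integral>\<^sup>+xs. \<integral>\<^sup>+es. \<integral>\<^sup>+e. ennreal (choice_prob_against x (e, es, xs)) * F x
        \<partial>N \<partial>PiM {..<m} (\<lambda>_. N) \<partial>PiM {..<m} (\<lambda>_. ?P))"
      unfolding I by (rule nn_integral_pair_measure_nested[OF sf]) (simp only: I(2)[symmetric], measurable)
    finally show "(\<integral>\<^sup>+xs. \<integral>\<^sup>+es. \<integral>\<^sup>+e. ennreal (choice_prob_against x (e, es, xs)) * F x
        \<partial>N \<partial>PiM {..<m} (\<lambda>_. N) \<partial>PiM {..<m} (\<lambda>_. ?P))
      = (\<integral>\<^sup>+\<omega>. ennreal (choice_prob_against x \<omega>) \<partial>rivals p) * F x" ..
  qed
  finally show ?thesis .
qed

lemma borel_measurable_nn_integral_choice_prob_against: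
  assumes "p \<in> dens_set M"
  shows "(\<lambda>x. \<integral>\<^sup>+\<omega>. ennreal (choice_prob_against x \<omega>) \<partial>rivals p) \<in> borel_measurable (density M (\<lambda>x. ennreal (p x)))"
proof -
  interpret rivals: prob_space "rivals p"
    using assms by (rule prob_space_rivals)
  show ?thesis
    by (rule rivals.borel_measurable_nn_integral) measurable
qed

lemma nn_integral_sum_choice_prob:
  assumes p: "p \<in> dens_set M" and F[measurable]: "F \<in> borel_measurable M"
  shows "(\<integral>\<^sup>+z. (\<Sum>k<K. ennreal (choice_prob k (fst z) (snd z)) * F (fst z k)) \<partial>samples p)
    = (\<integral>\<^sup>+x. ennreal (choice_kernel M N r \<epsilon> K p x) * F x \<partial>density M (\<lambda>x. ennreal (p x)))"
proof -
  let ?P = "density M (\<lambda>x. ennreal (p x))"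
  obtain m where K: "K = Suc m"
    using two_le_K by (cases K) auto
  then have "m < K"
    by simp
  define h where "h k z = ennreal (choice_prob k (fst z) (snd z)) * F (fst z k)" for k z
  have h_measurable: "h k \<in> borel_measurable (samples p)" if "k < K" for k
    unfolding h_def[abs_def] using that F by (rule choice_prob_mult_measurable)
  have exchangeable: "integral\<^sup>N (samples p) (h k) = integral\<^sup>N (samples p) (h m)" if "k < K" for k
  proof -
    have \<sigma>: "bij_betw (Transposition.transpose k m) {..<K} {..<K}"
      using that \<open>m < K\<close> by simp
    have "integral\<^sup>N (samples p) (h m)
        = (\<integral>\<^sup>+z. h m (\<lambda>n\<in>{..<K}. fst z (Transposition.transpose k m n), \<lambda>n\<in>{..<K}. snd z (Transposition.transpose k m n)) \<partial>samples p)"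
      by (intro nn_integral_PiM_pair_permute prob_space_density_dens_set p prob_space_N \<sigma> h_measurable \<open>m < K\<close>)
    also have "\<dots> = integral\<^sup>N (samples p) (h k)"
      using \<open>m < K\<close> by (simp add: h_def[abs_def] choice_prob_permute[OF \<sigma>])
    finally show ?thesis ..
  qed
  have "(\<integral>\<^sup>+z. (\<Sum>k<K. h k z) \<partial>samples p) = (\<Sum>k<K. integral\<^sup>N (samples p) (h k))"
    by (intro nn_integral_sum h_measurable) simp
  also have "\<dots> = of_nat K * integral\<^sup>N (samples p) (h m)"
    by (simp add: exchangeable)
  also have "\<dots> = of_nat K * (\<integral>\<^sup>+x. (\<integral>\<^sup>+\<omega>. ennreal (choice_prob_against x \<omega>) \<partial>rivals p) * F x \<partial>?P)"
    unfolding h_def by (simp add: nn_integral_last_choice_prob[OF p K F])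
  also have "\<dots> = (\<integral>\<^sup>+x. ennreal (choice_kernel M N r \<epsilon> K p x) * F x \<partial>?P)"
    using borel_measurable_nn_integral_choice_prob_against[OF p]
    by (subst nn_integral_cmult[symmetric])
       (auto intro!: nn_integral_cong simp: ennreal_choice_kernel[OF p] mult.assoc)
  finally show ?thesis
    unfolding h_def .
qed

abbreviation curated :: "('a \<Rightarrow> real) \<Rightarrow> 'a \<Rightarrow> real" where
  "curated p \<equiv> \<lambda>x. p x * choice_kernel M N r \<epsilon> K p x"

lemma nn_integral_density_choice_kernel:
  assumes p: "p \<in> dens_set M" and [measurable]: "g \<in> borel_measurable M"
  shows "(\<integral>\<^sup>+x. ennreal (choice_kernel M N r \<epsilon> K p x) * g x \<partial>density M (\<lambda>x. ennreal (p x)))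
    = (\<integral>\<^sup>+x. ennreal (curated p x) * g x \<partial>M)"
proof -
  have [measurable]: "p \<in> borel_measurable M" "choice_kernel M N r \<epsilon> K p \<in> borel_measurable M"
    using p by (simp_all add: dens_set_def choice_kernel_measurable)
  have "\<And>x. x \<in> space M \<Longrightarrow> 0 \<le> p x"
    using p by (simp add: dens_set_def)
  then show ?thesis
    by (subst nn_integral_density)
       (auto intro!: nn_integral_cong simp: choice_kernel_nonneg ennreal_mult mult.assoc)
qed

lemma curated_dens_set:
  assumes p: "p \<in> dens_set M"
  shows "curated p \<in> dens_set M"
proof -
  have [measurable]: "p \<in> borel_measurable M" "choice_kernel M N r \<epsilon> K p \<in> borel_measurable M"
    and p0: "\<And>x. x \<in> space M \<Longrightarrow> 0 \<le> p x"
    using p by (simp_all add: dens_set_def choice_kernel_measurable)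
  have "prob_space (samples p)"
    using p by (intro prob_space_pair prob_space_N prob_space_PiM prob_space_density_dens_set)
  then have "1 = (\<integral>\<^sup>+z. (\<Sum>k<K. ennreal (choice_prob k (fst z) (snd z)) * 1) \<partial>samples p)"
    by (simp add: less_imp_le choice_prob_pos sum_choice_prob prob_space.emeasure_space_1)
  also have "\<dots> = (\<integral>\<^sup>+x. ennreal (curated p x) \<partial>M)"
    using nn_integral_sum_choice_prob[OF p, of "\<lambda>_. 1"] nn_integral_density_choice_kernel[OF p, of "\<lambda>_. 1"]
    by simp
  finally show ?thesis
    using p0 unfolding dens_set_def by (auto simp: choice_kernel_nonneg)
qed

lemma finite_entropy_density_curated:
  assumes p: "finite_entropy_density M p"
  shows "finite_entropy_density M (curated p)"
proof -
  have p': "p \<in> dens_set M"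
    using p by (simp add: finite_entropy_density_def)
  have "(\<integral>\<^sup>+x. ennreal (curated p x * \<bar>ln (curated p x)\<bar>) \<partial>M) < \<infinity>"
    using two_le_K
    by (intro nn_integral_entropy_mult_finite[OF p choice_kernel_measurable[OF p'] choice_kernel_nonneg
          choice_kernel_le_K[OF p']]) simp_all
  with p' show ?thesis
    unfolding finite_entropy_density_def by (simp add: curated_dens_set)
qed

lemma PL_obj_eq_log_integral:
  assumes p: "p \<in> dens_set M" and [measurable]: "q \<in> borel_measurable M"
    and fin: "(\<integral>\<^sup>+x. ennreal (curated p x) * log_pos (q x) \<partial>M) < \<infinity>"
  shows "PL_obj M N r \<epsilon> K p q = log_integral M (curated p) q"
proof -
  define S where "S z = (\<Sum>k<K. ereal (choice_prob k (fst z) (snd z)) * elog (q (fst z k)))" for z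
  define a where "a z = (\<Sum>k<K. ennreal (choice_prob k (fst z) (snd z)) * log_pos (q (fst z k)))" for z
  define b where "b z = (\<Sum>k<K. ennreal (choice_prob k (fst z) (snd z)) * log_neg (q (fst z k)))" for z
  have log_parts_q: "(\<lambda>x. log_pos (q x)) \<in> borel_measurable M" "(\<lambda>x. log_neg (q x)) \<in> borel_measurable M"
    by measurable
  have int_a: "(\<integral>\<^sup>+z. a z \<partial>samples p) = (\<integral>\<^sup>+x. ennreal (curated p x) * log_pos (q x) \<partial>M)"
    unfolding a_def nn_integral_sum_choice_prob[OF p log_parts_q(1)]
    by (rule nn_integral_density_choice_kernel[OF p log_parts_q(1)])
  have int_b: "(\<integral>\<^sup>+z. b z \<partial>samples p) = (\<integral>\<^sup>+x. ennreal (curated p x) * log_neg (q x) \<partial>M)"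
    unfolding b_def nn_integral_sum_choice_prob[OF p log_parts_q(2)]
    by (rule nn_integral_density_choice_kernel[OF p log_parts_q(2)])
  have "PL_obj M N r \<epsilon> K p q = eexp (samples p) S"
    unfolding PL_obj_def S_def choice_prob_def by (simp add: split_beta')
  also have "\<dots> = enn2ereal (\<integral>\<^sup>+z. a z \<partial>samples p) - enn2ereal (\<integral>\<^sup>+z. b z \<partial>samples p)"
  proof (rule eexp_eq_diff_nn_integral)
    show "S \<in> borel_measurable (samples p)" "a \<in> borel_measurable (samples p)"
      "b \<in> borel_measurable (samples p)"
      unfolding S_def a_def b_def choice_prob_def by measurable
    show "e2ennreal (S z) + b z = a z + e2ennreal (- S z)" "e2ennreal (S z) \<le> a z" for z
      unfolding S_def a_def b_def by (simp_all add: e2ennreal_sum_mult_elog choice_prob_pos)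
    show "(\<integral>\<^sup>+z. a z \<partial>samples p) < \<infinity>"
      using fin int_a by simp
  qed
  also have "\<dots> = log_integral M (curated p) q"
    unfolding log_integral_def int_a int_b ..
  finally show ?thesis .
qed

lemma
  assumes p: "finite_entropy_density M p" and q: "q \<in> dens_set M"
  shows PL_obj_dens_set_eq_log_integral: "PL_obj M N r \<epsilon> K p q = log_integral M (curated p) q"
    and PL_obj_eq_expected_weighted_log: "PL_obj M N r \<epsilon> K p q
      = eexp (density M (\<lambda>x. ennreal (p x))) (\<lambda>x. elog (q x) * ereal (choice_kernel M N r \<epsilon> K p x))"
proof -
  have p': "p \<in> dens_set M" and [measurable]: "p \<in> borel_measurable M" "q \<in> borel_measurable M"
    and p0: "\<And>x. x \<in> space M \<Longrightarrow> 0 \<le> p x"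
    using p q by (simp_all add: finite_entropy_density_def dens_set_def)
  show *: "PL_obj M N r \<epsilon> K p q = log_integral M (curated p) q"
    by (rule PL_obj_eq_log_integral[OF p' \<open>q \<in> borel_measurable M\<close>
          nn_integral_mult_log_pos_finite[OF finite_entropy_density_curated[OF p] q]])
  show "PL_obj M N r \<epsilon> K p q
      = eexp (density M (\<lambda>x. ennreal (p x))) (\<lambda>x. elog (q x) * ereal (choice_kernel M N r \<epsilon> K p x))"
    unfolding * using choice_kernel_measurable[OF p']
    by (intro eexp_density_elog_mult[symmetric]) (simp_all add: p0 choice_kernel_nonneg)
qed

lemma
  assumes p: "finite_entropy_density M p"
  shows is_PL_maximizer_curated: "is_PL_maximizer M N r \<epsilon> K p (curated p)"
    and is_PL_maximizer_iff: "is_PL_maximizer M N r \<epsilon> K p q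
      \<longleftrightarrow> q \<in> dens_set M \<and> (AE x in M. q x = curated p x)"
proof -
  note f = finite_entropy_density_curated[OF p]
  then have f': "curated p \<in> dens_set M"
    by (simp add: finite_entropy_density_def)
  note obj = PL_obj_dens_set_eq_log_integral[OF p]
  have le: "PL_obj M N r \<epsilon> K p q' \<le> PL_obj M N r \<epsilon> K p (curated p)" if "q' \<in> dens_set M" for q'
    unfolding obj[OF that] obj[OF f'] by (rule gibbs_inequality[OF f that])
  then show max: "is_PL_maximizer M N r \<epsilon> K p (curated p)"
    unfolding is_PL_maximizer_def using f' by blast
  show "is_PL_maximizer M N r \<epsilon> K p q \<longleftrightarrow> q \<in> dens_set M \<and> (AE x in M. q x = curated p x)"
  proof
    assume "is_PL_maximizer M N r \<epsilon> K p q"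
    then have q: "q \<in> dens_set M" and ge: "PL_obj M N r \<epsilon> K p (curated p) \<le> PL_obj M N r \<epsilon> K p q"
      using f' unfolding is_PL_maximizer_def by auto
    have "log_integral M (curated p) q = log_integral M (curated p) (curated p)"
      using le[OF q] ge unfolding obj[OF q] obj[OF f'] by (rule antisym)
    with q show "q \<in> dens_set M \<and> (AE x in M. q x = curated p x)"
      using log_integral_eq_self_imp_AE_eq[OF f q] by blast
  next
    assume "q \<in> dens_set M \<and> (AE x in M. q x = curated p x)"
    then have q: "q \<in> dens_set M" and ae: "AE x in M. q x = curated p x"
      by auto
    have "log_integral M (curated p) q = log_integral M (curated p) (curated p)"
      unfolding log_integral_def using ae
      by (intro arg_cong2[where f="\<lambda>a b. enn2ereal a - enn2ereal b"] nn_integral_cong_AE) auto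
    then show "is_PL_maximizer M N r \<epsilon> K p q"
      using max q unfolding is_PL_maximizer_def obj[OF q] obj[OF f'] by simp
  qed
qed

lemma finite_entropy_density_maximizer:
  assumes p: "finite_entropy_density M p" and max: "is_PL_maximizer M N r \<epsilon> K p q"
  shows "finite_entropy_density M q"
proof -
  have "q \<in> dens_set M" "AE x in M. q x = curated p x"
    using max is_PL_maximizer_iff[OF p] by blast+
  moreover from this(2) have "(\<integral>\<^sup>+x. ennreal (q x * \<bar>ln (q x)\<bar>) \<partial>M)
      = (\<integral>\<^sup>+x. ennreal (curated p x * \<bar>ln (curated p x)\<bar>) \<partial>M)"
    by (intro nn_integral_cong_AE) auto
  ultimately show ?thesis
    using finite_entropy_density_curated[OF p] by (simp add: finite_entropy_density_def)
qed

lemma finite_entropy_density_maximizer_chain: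
  assumes "finite_entropy_density M (p 0)" and "\<forall>t. is_PL_maximizer M N r \<epsilon> K (p t) (p (Suc t))"
  shows "finite_entropy_density M (p t)"
  using assms by (induction t) (auto intro: finite_entropy_density_maximizer)

lemma maximizer_chain_exists:
  assumes "finite_entropy_density M p0"
  shows "\<exists>p. p 0 = p0 \<and> (\<forall>t. is_PL_maximizer M N r \<epsilon> K (p t) (p (Suc t)))"
proof -
  define p where "p t = (curated ^^ t) p0" for t
  have "finite_entropy_density M (p t)" for t
    using assms by (induction t) (simp_all add: p_def finite_entropy_density_curated)
  then have "is_PL_maximizer M N r \<epsilon> K (p t) (p (Suc t))" for t
    unfolding p_def by (simp add: is_PL_maximizer_curated)
  then show ?thesis
    by (intro exI[of _ p]) (simp add: p_def)
qed

end

theorem theorem1: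
  fixes M :: "'a measure" and N :: "'w measure" and r :: "'a \<Rightarrow> real"
    and \<epsilon> :: "'w \<Rightarrow> 'a \<Rightarrow> real" and K :: nat and p0 :: "'a \<Rightarrow> real"
  assumes "sigma_finite_measure M"
    and "r \<in> borel_measurable M"
    and "prob_space N"
    and "(\<lambda>(\<omega>, x). \<epsilon> \<omega> x) \<in> borel_measurable (N \<Otimes>\<^sub>M M)"
    and "K \<ge> 2"
    and "p0 \<in> dens_set M"
    and "(\<integral>\<^sup>+x. ennreal (p0 x * \<bar>ln (p0 x)\<bar>) \<partial>M) < \<infinity>"
  shows "(\<exists>p. p 0 = p0 \<and> (\<forall>t. is_PL_maximizer M N r \<epsilon> K (p t) (p (Suc t))))
    \<and> (\<forall>p. p 0 = p0 \<and> (\<forall>t. is_PL_maximizer M N r \<epsilon> K (p t) (p (Suc t))) \<longrightarrow>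
         (\<forall>t.
           (\<forall>q\<in>dens_set M. PL_obj M N r \<epsilon> K (p t) q =
              eexp (density M (\<lambda>x. ennreal (p t x)))
                (\<lambda>x. elog (q x) * ereal (choice_kernel M N r \<epsilon> K (p t) x)))
         \<and> is_PL_maximizer M N r \<epsilon> K (p t) (\<lambda>x. p t x * choice_kernel M N r \<epsilon> K (p t) x)
         \<and> (\<forall>q. is_PL_maximizer M N r \<epsilon> K (p t) q \<longleftrightarrow>
               q \<in> dens_set M \<and> (AE x in M. q x = p t x * choice_kernel M N r \<epsilon> K (p t) x))
         \<and> (AE x in M. p (Suc t) x = p t x * choice_kernel M N r \<epsilon> K (p t) x)))"
proof -
  interpret plackett_luce M N r \<epsilon> K
    using assms(2-5) by (rule plackett_luce.intro)
  have p0: "finite_entropy_density M p0"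
    using assms(6,7) by (simp add: finite_entropy_density_def)
  have chain: "finite_entropy_density M (p t)"
    if "p 0 = p0 \<and> (\<forall>t. is_PL_maximizer M N r \<epsilon> K (p t) (p (Suc t)))" for p t
    using that p0 by (auto intro: finite_entropy_density_maximizer_chain)
  show ?thesis
  proof (intro conjI allI impI ballI, goal_cases)
    case 1
    show ?case
      using maximizer_chain_exists[OF p0] .
  next
    case (2 p t q)
    show ?case
      using chain[OF 2(1)] 2(2) by (rule PL_obj_eq_expected_weighted_log)
  next
    case (3 p t)
    show ?case
      using chain[OF 3] by (rule is_PL_maximizer_curated)
  next
    case (4 p t q)
    show ?case
      using chain[OF 4] by (rule is_PL_maximizer_iff)
  next
    case (5 p t)
    then show ?case
      using is_PL_maximizer_iff[OF chain[OF 5]] by blast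
  qed
qed

end
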